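(* Let $I=[0,\infty]$, let $\mu$ be a Borel probability measure on $I$ with $F(t)=\mu[0,t]$, fix $T>0$ and $\alpha\in[0,1]$, put $F(T-)=\mu[0,T)$, and assume $\alpha>F(T-)>0$ and $F(T')<F(T)$ for all $T'\in[0,T)$. Let $\tilde\mu^*_\alpha(A)=\mu(A\cap[0,T))\frac{\alpha}{F(T-)}+\mu(A\cap[T,\infty])\frac{1-\alpha}{1-F(T-)}$, and fix $N$ and a probability measure $\tilde{\mathbb{P}}_N$ (expectation $\tilde{\mathbb{E}}_N$) under which $\tau_1,\tau_2,\dots$ are i.i.d. with law $\tilde\mu^*_\alpha$. Fix $T^*\in(0,T)$ with $F((T-T^* )-)>0$. For each $n$ and $t\in[0,T)$ let $Z^{(n)}_t=\chi_{\{\tau_n<T-t\}}$, and let $\mathscr{G}_t=\sigma\{Z^{(n)}_s:0\le s\le t,\ n\ge1\}$. For $t\in[0,T^*]$ define $$A^{(n)}_t=-\int_{r\in[T-t,T)}\frac{1}{F(r)}Z^{(n)}_{(T-r)-}\,dF_r,\qquad M^{(n)}_t=Z^{(n)}_t-\chi_{\{\tau_n<T\}}-A^{(n)}_t,$$ where $Z^{(n)}_{(T-r)-}$ is the left limit of $u\mapsto Z^{(n)}_u$ at $u=T-r$ and $dF_r$ is the Lebesgue–Stieltjes measure of $F$. Then for every $n\in\{1,\dots,N\}$, $M^{(n)}$ is a zero-mean martingale under $\tilde{\mathbb{P}}_N$ with respect to $\{\mathscr{G}_t;t\in[0,T^*]\}$, i.e. $\tilde{\mathbb{E}}_N[M^{(n)}_t|\mathscr{G}_s]=M^{(n)}_s$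 for $0\le s\le t\le T^*$ and $\tilde{\mathbb{E}}_N[M^{(n)}_t]=0$.
   Context: $I=[0,\infty]$ is the compactified half-line with its usual order and topology. *)

theory Defs
  imports "HOL-Probability.Probability"
begin

text \<open>The compactified half-line I = [0,\<infinity>] is the type ennreal (with its order topology).\<close>

definition cdfI :: "ennreal measure \<Rightarrow> ennreal \<Rightarrow> real" where
  "cdfI \<mu> t = measure \<mu> {..t}"

definition cdfI_left :: "ennreal measure \<Rightarrow> ennreal \<Rightarrow> real" where
  "cdfI_left \<mu> t = measure \<mu> {..<t}"

definition Zproc :: "(nat \<Rightarrow> 'w \<Rightarrow> ennreal) \<Rightarrow> real \<Rightarrow> nat \<Rightarrow> real \<Rightarrow> 'w \<Rightarrow> real" where
  "Zproc \<tau> T n t \<omega> = (if \<tau> n \<omega> < ennreal (T - t) then 1 else 0)"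

definition Zleft :: "(nat \<Rightarrow> 'w \<Rightarrow> ennreal) \<Rightarrow> real \<Rightarrow> nat \<Rightarrow> real \<Rightarrow> 'w \<Rightarrow> real" where
  "Zleft \<tau> T n x \<omega> = Lim (at_left x) (\<lambda>u. Zproc \<tau> T n u \<omega>)"

text \<open>Filtration G_t = sigma{Z^(n)_s : 0 \<le> s \<le> t, n \<ge> 1}; since each Z^(n)_s is an
  indicator, its sigma-algebra is generated by the event {Z^(n)_s = 1}.\<close>
definition Gfilt :: "'w measure \<Rightarrow> (nat \<Rightarrow> 'w \<Rightarrow> ennreal) \<Rightarrow> real \<Rightarrow> real \<Rightarrow> 'w measure" where
  "Gfilt P \<tau> T t = sigma (space P)
     {{\<omega> \<in> space P. \<tau> n \<omega> < ennreal (T - s)} | n s. 1 \<le> n \<and> 0 \<le> s \<and> s \<le> t}"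

definition Aproc :: "ennreal measure \<Rightarrow> (nat \<Rightarrow> 'w \<Rightarrow> ennreal) \<Rightarrow> real \<Rightarrow> nat \<Rightarrow> real \<Rightarrow> 'w \<Rightarrow> real" where
  "Aproc \<mu> \<tau> T n t \<omega> =
     - (LINT r:{ennreal (T - t)..<ennreal T}|\<mu>. (1 / cdfI \<mu> r) * Zleft \<tau> T n (T - enn2real r) \<omega>)"

definition Mproc :: "ennreal measure \<Rightarrow> (nat \<Rightarrow> 'w \<Rightarrow> ennreal) \<Rightarrow> real \<Rightarrow> nat \<Rightarrow> real \<Rightarrow> 'w \<Rightarrow> real" where
  "Mproc \<mu> \<tau> T n t \<omega> =
     Zproc \<tau> T n t \<omega> - (if \<tau> n \<omega> < ennreal T then 1 else 0) - Aproc \<mu> \<tau> T n t \<omega>"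

end

theory Submission
  imports Defs
begin

text \<open>
  Everything is a function of the single time \<open>\<tau> = \<tau>\<^sub>n\<close>. The left limit \<open>Z\<^sub>(T-r)-\<close> is the
  indicator of \<open>\<tau> \<le> r\<close>, so with \<open>c = T - t\<close> the process is \<open>M\<^sub>t = C(c, T, \<tau>) - [c \<le> \<tau> < T]\<close>,
  where \<open>C(c, d, x) = \<integral>\<^sub>[c,d) [x \<le> r] / F(r) d\<mu>(r)\<close>. Below \<open>T\<close> the law of \<open>\<tau>\<close> is \<open>a \<mu>\<close>
  with \<open>a = \<alpha> / F(T-)\<close>, hence \<open>P(\<tau> \<le> r) = a F(r)\<close>, and Fubini gives
  \<open>E C(c, d, \<tau>) = a \<mu>[c, d) = P(c \<le> \<tau> < d)\<close>: such compensated indicators have mean zero.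

  The increment \<open>M\<^sub>t - M\<^sub>s\<close> is the compensated indicator of \<open>[T - t, T - s)\<close>; it vanishes
  when \<open>\<tau> \<ge> T - s\<close>. The \<open>\<sigma>\<close>-algebra of time \<open>s\<close> is generated by the finite intersections
  of events \<open>{\<tau>\<^sub>m < c}\<close> with \<open>c \<ge> T - s\<close>. Wherever the increment is nonzero the
  constraints on \<open>\<tau>\<^sub>n\<close> in such an intersection hold automatically, so by independence its
  integral over the intersection is \<open>E(M\<^sub>t - M\<^sub>s)\<close> times a probability, i.e. zero;
  Dynkin's \<open>\<pi>\<close>-\<open>\<lambda>\<close> argument extends this to the whole \<open>\<sigma>\<close>-algebra.
\<close>

section \<open>Compensated indicators of a distribution\<close>

definition compensator_density :: "ennreal measure \<Rightarrow> ennreal \<Rightarrow> ennreal \<Rightarrow> real" where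
  "compensator_density \<mu> x r = (if x \<le> r then 1 / cdfI \<mu> r else 0)"

definition compensator :: "ennreal measure \<Rightarrow> ennreal \<Rightarrow> ennreal \<Rightarrow> ennreal \<Rightarrow> real" where
  "compensator \<mu> c d x = (LINT r:{c..<d}|\<mu>. compensator_density \<mu> x r)"

definition compensated_indicator :: "ennreal measure \<Rightarrow> ennreal \<Rightarrow> ennreal \<Rightarrow> ennreal \<Rightarrow> real" where
  "compensated_indicator \<mu> c d x = compensator \<mu> c d x - indicator {c..<d} x"

context
  fixes \<mu> :: "ennreal measure"
  assumes finite_mu: "finite_measure \<mu>" and sets_mu [measurable_cong]: "sets \<mu> = sets borel"
begin

interpretation finite_measure \<mu> by (rule finite_mu)

lemma cdfI_mono: "x \<le> y \<Longrightarrow> cdfI \<mu> x \<le> cdfI \<mu> y"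
  unfolding cdfI_def by (intro finite_measure_mono) (auto simp: sets_mu)

lemma cdfI_left_le_cdfI: "x \<le> y \<Longrightarrow> cdfI_left \<mu> x \<le> cdfI \<mu> y"
  unfolding cdfI_def cdfI_left_def by (intro finite_measure_mono) (auto simp: sets_mu)

lemma borel_measurable_cdfI [measurable]: "cdfI \<mu> \<in> borel_measurable borel"
proof -
  have "cdfI \<mu> = (\<lambda>r. \<integral>x. (if x \<le> r then 1 else 0) \<partial>\<mu>)"
  proof
    fix r
    have "cdfI \<mu> r = (\<integral>x. indicator {..r} x \<partial>\<mu>)"
      by (simp add: cdfI_def sets_mu)
    also have "\<dots> = (\<integral>x. (if x \<le> r then 1 else 0) \<partial>\<mu>)"
      by (intro Bochner_Integration.integral_cong) (auto simp: indicator_def)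
    finally show "cdfI \<mu> r = (\<integral>x. (if x \<le> r then 1 else 0) \<partial>\<mu>)" .
  qed
  moreover have "(\<lambda>(r, x). if x \<le> r then 1 else 0 :: real) \<in> borel_measurable (borel \<Otimes>\<^sub>M \<mu>)"
    by measurable
  ultimately show ?thesis
    by (simp add: borel_measurable_lebesgue_integral)
qed

lemma borel_measurable_compensator_density [measurable]:
  "(\<lambda>(x, r). compensator_density \<mu> x r) \<in> borel_measurable (borel \<Otimes>\<^sub>M borel)"
  unfolding compensator_density_def by measurable

lemma borel_measurable_compensator [measurable]: "compensator \<mu> c d \<in> borel_measurable borel"
proof -
  have "(\<lambda>(x, r). indicator {c..<d} r *\<^sub>R compensator_density \<mu> x r) \<in> borel_measurable (borel \<Otimes>\<^sub>M \<mu>)"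
    by measurable
  then show ?thesis
    unfolding compensator_def set_lebesgue_integral_def by (rule borel_measurable_lebesgue_integral)
qed

lemma abs_compensator_density_le:
  "0 < cdfI \<mu> c \<Longrightarrow> c \<le> r \<Longrightarrow> \<bar>compensator_density \<mu> x r\<bar> \<le> 1 / cdfI \<mu> c"
  using cdfI_mono[of c r] by (auto simp: compensator_density_def frac_le)

lemma set_integrable_compensator_density:
  assumes "0 < cdfI \<mu> c"
  shows "set_integrable \<mu> {c..<d} (compensator_density \<mu> x)"
  unfolding set_integrable_def
proof (rule integrable_const_bound[where B = "1 / cdfI \<mu> c"])
  show "AE r in \<mu>. norm (indicator {c..<d} r *\<^sub>R compensator_density \<mu> x r) \<le> 1 / cdfI \<mu> c"
    using abs_compensator_density_le[OF assms] assms by (auto simp: indicator_def)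
  have "compensator_density \<mu> x \<in> borel_measurable borel"
    using measurable_Pair2[OF borel_measurable_compensator_density] by simp
  then show "(\<lambda>r. indicator {c..<d} r *\<^sub>R compensator_density \<mu> x r) \<in> borel_measurable \<mu>"
    by measurable
qed

lemma abs_compensator_le:
  assumes "0 < cdfI \<mu> c"
  shows "\<bar>compensator \<mu> c d x\<bar> \<le> measure \<mu> {c..<d} / cdfI \<mu> c"
proof -
  have "integrable \<mu> (\<lambda>r. 1 / cdfI \<mu> c * indicator {c..<d} r)"
    by (rule integrable_real_mult_indicator) (auto simp: sets_mu)
  then have "\<bar>compensator \<mu> c d x\<bar> \<le> (\<integral>r. 1 / cdfI \<mu> c * indicator {c..<d} r \<partial>\<mu>)"
    unfolding compensator_def set_lebesgue_integral_def real_norm_def[symmetric]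
    using set_integrable_compensator_density[OF assms] abs_compensator_density_le[OF assms]
    by (intro order_trans[OF integral_norm_bound] integral_mono)
       (auto simp: set_integrable_def indicator_def)
  also have "\<dots> = measure \<mu> {c..<d} / cdfI \<mu> c"
    by (simp add: sets_mu)
  finally show ?thesis .
qed

lemma compensator_split:
  assumes "0 < cdfI \<mu> c" "c \<le> e" "e \<le> d"
  shows "compensator \<mu> c d x = compensator \<mu> c e x + compensator \<mu> e d x"
proof -
  have "0 < cdfI \<mu> e"
    using assms cdfI_mono[of c e] by linarith
  then have "set_integrable \<mu> {c..<e} (compensator_density \<mu> x)"
    "set_integrable \<mu> {e..<d} (compensator_density \<mu> x)"
    using assms(1) by (auto intro: set_integrable_compensator_density)
  moreover have "{c..<d} = {c..<e} \<union> {e..<d}"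
    using assms by auto
  ultimately show ?thesis
    unfolding compensator_def by (simp only:) (rule set_integral_Un, auto)
qed

lemma compensator_clamp: "compensator \<mu> c d (min (max x c) d) = compensator \<mu> c d x"
  unfolding compensator_def
  by (intro set_lebesgue_integral_cong) (auto simp: sets_mu compensator_density_def min_def max_def)

lemma compensator_eq_0: "d \<le> x \<Longrightarrow> compensator \<mu> c d x = 0"
proof -
  assume "d \<le> x"
  then have "compensator \<mu> c d x = (LINT r:{c..<d}|\<mu>. 0)"
    unfolding compensator_def
    by (intro set_lebesgue_integral_cong) (auto simp: sets_mu compensator_density_def)
  then show ?thesis
    by (simp add: set_lebesgue_integral_def)
qed

lemma compensated_indicator_split:
  assumes "0 < cdfI \<mu> c" "c \<le> e" "e \<le> d"
  shows "compensated_indicator \<mu> c d x = compensated_indicator \<mu> c e x + compensated_indicator \<mu> e d x"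
  using compensator_split[OF assms] assms
  by (auto simp: compensated_indicator_def indicator_def)

lemma compensated_indicator_eq_0: "d \<le> x \<Longrightarrow> compensated_indicator \<mu> c d x = 0"
  by (simp add: compensated_indicator_def compensator_eq_0 indicator_def not_less)

lemma borel_measurable_compensated_indicator [measurable]:
  "compensated_indicator \<mu> c d \<in> borel_measurable borel"
  unfolding compensated_indicator_def by measurable

lemma abs_compensated_indicator_le:
  "0 < cdfI \<mu> c \<Longrightarrow> \<bar>compensated_indicator \<mu> c d x\<bar> \<le> measure \<mu> {c..<d} / cdfI \<mu> c + 1"
  using abs_compensator_le[of c d x] by (auto simp: compensated_indicator_def indicator_def)

lemma integrable_compensated_indicator:
  assumes "finite_measure P" "X \<in> borel_measurable P" "0 < cdfI \<mu> c"
  shows "integrable P (\<lambda>\<omega>. compensated_indicator \<mu> c d (X \<omega>))"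
  using abs_compensated_indicator_le[OF assms(3)] assms(2)
  by (intro finite_measure.integrable_const_bound[OF assms(1)]) auto

lemma integral_compensator_density_eq:
  assumes P: "prob_space P" and X [measurable]: "X \<in> borel_measurable P" and pos: "0 < cdfI \<mu> r"
    and "r < d" and law: "\<And>B. B \<in> sets borel \<Longrightarrow> B \<subseteq> {..<d} \<Longrightarrow>
      measure P {\<omega> \<in> space P. X \<omega> \<in> B} = a * measure \<mu> B"
  shows "(\<integral>\<omega>. compensator_density \<mu> (X \<omega>) r \<partial>P) = a"
proof -
  interpret P: prob_space P by (rule P)
  have "(\<integral>\<omega>. compensator_density \<mu> (X \<omega>) r \<partial>P) = (\<integral>\<omega>. indicator {\<omega> \<in> space P. X \<omega> \<in> {..r}} \<omega> / cdfI \<mu> r \<partial>P)"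
    by (intro Bochner_Integration.integral_cong) (auto simp: compensator_density_def)
  also have "\<dots> = measure P {\<omega> \<in> space P. X \<omega> \<in> {..r}} / cdfI \<mu> r"
    by simp
  also have "\<dots> = a"
  proof -
    have "{..r} \<subseteq> {..<d}"
      using \<open>r < d\<close> by (auto intro: order.strict_trans1)
    then show ?thesis
      using law[of "{..r}"] pos by (simp add: cdfI_def)
  qed
  finally show ?thesis .
qed

lemma integral_compensator_eq:
  assumes P: "prob_space P" and X [measurable]: "X \<in> borel_measurable P" and pos: "0 < cdfI \<mu> c"
    and law: "\<And>B. B \<in> sets borel \<Longrightarrow> B \<subseteq> {..<d} \<Longrightarrow>
      measure P {\<omega> \<in> space P. X \<omega> \<in> B} = a * measure \<mu> B"
  shows "(\<integral>\<omega>. compensator \<mu> c d (X \<omega>) \<partial>P) = a * measure \<mu> {c..<d}"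
proof -
  interpret P: prob_space P by (rule P)
  interpret pair_sigma_finite P \<mu>
    by (intro pair_sigma_finite.intro P.sigma_finite_measure_axioms sigma_finite_measure)
  interpret PM: finite_measure "P \<Otimes>\<^sub>M \<mu>"
    by (rule finite_measure_pair_measure) unfold_locales
  define f where "f \<omega> r = indicator {c..<d} r * compensator_density \<mu> (X \<omega>) r" for \<omega> r
  have "(\<lambda>(\<omega>, r). compensator_density \<mu> (X \<omega>) r) \<in> borel_measurable (P \<Otimes>\<^sub>M \<mu>)"
    using measurable_comp[OF _ borel_measurable_compensator_density, of "\<lambda>(\<omega>, r). (X \<omega>, r)"]
    by (simp add: split_beta')
  moreover have "\<bar>f \<omega> r\<bar> \<le> 1 / cdfI \<mu> c" for \<omega> r
    using abs_compensator_density_le[OF pos] pos by (auto simp: f_def indicator_def)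
  ultimately have "integrable (P \<Otimes>\<^sub>M \<mu>) (\<lambda>(\<omega>, r). f \<omega> r)"
    by (intro PM.integrable_const_bound[where B = "1 / cdfI \<mu> c"]) (auto simp: f_def split: prod.split)
  then have "(\<integral>\<omega>. (\<integral>r. f \<omega> r \<partial>\<mu>) \<partial>P) = (\<integral>r. (\<integral>\<omega>. f \<omega> r \<partial>P) \<partial>\<mu>)"
    by (rule Fubini_integral[symmetric])
  also have "\<dots> = (\<integral>r. a * indicator {c..<d} r \<partial>\<mu>)"
  proof (intro Bochner_Integration.integral_cong refl)
    fix r
    have "0 < cdfI \<mu> r" if "c \<le> r"
      using pos cdfI_mono[OF that] by linarith
    then show "(\<integral>\<omega>. f \<omega> r \<partial>P) = a * indicator {c..<d} r"
      using integral_compensator_density_eq[OF P X _ _ law] by (auto simp: f_def indicator_def)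
  qed
  also have "\<dots> = a * measure \<mu> {c..<d}"
    by (simp add: sets_mu)
  finally show ?thesis
    by (simp add: compensator_def set_lebesgue_integral_def f_def)
qed

lemma integral_compensated_indicator_eq_0:
  assumes P: "prob_space P" and X [measurable]: "X \<in> borel_measurable P" and pos: "0 < cdfI \<mu> c"
    and law: "\<And>B. B \<in> sets borel \<Longrightarrow> B \<subseteq> {..<d} \<Longrightarrow>
      measure P {\<omega> \<in> space P. X \<omega> \<in> B} = a * measure \<mu> B"
  shows "(\<integral>\<omega>. compensated_indicator \<mu> c d (X \<omega>) \<partial>P) = 0"
proof -
  interpret P: prob_space P by (rule P)
  have "(\<integral>\<omega>. indicator {c..<d} (X \<omega>) \<partial>P) = (\<integral>\<omega>. indicator {\<omega> \<in> space P. X \<omega> \<in> {c..<d}} \<omega> \<partial>P)"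
    by (intro Bochner_Integration.integral_cong) (auto simp: indicator_def)
  also have "\<dots> = measure P {\<omega> \<in> space P. X \<omega> \<in> {c..<d}}"
    using measurable_sets[OF X, of "{c..<d}"] by (simp add: vimage_def Int_def conj_commute)
  finally have "(\<integral>\<omega>. indicator {c..<d} (X \<omega>) \<partial>P) = a * measure \<mu> {c..<d}"
    using law[of "{c..<d}"] by (auto simp: subset_eq)
  moreover have "integrable P (\<lambda>\<omega>. compensator \<mu> c d (X \<omega>))"
    using abs_compensator_le[OF pos] by (intro P.integrable_const_bound) auto
  moreover have "integrable P (\<lambda>\<omega>. indicator {c..<d} (X \<omega>) :: real)"
    by (intro P.integrable_const_bound[where B = 1]) (auto simp: indicator_def)
  ultimately show ?thesis
    using integral_compensator_eq[OF P X pos law]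
    by (simp add: compensated_indicator_def)
qed

end

section \<open>\<open>\<sigma>\<close>-algebras generated by threshold events\<close>

definition threshold_sigma :: "'w measure \<Rightarrow> ('i \<Rightarrow> 'w \<Rightarrow> 'a::linorder) \<Rightarrow> 'i set \<Rightarrow> 'a set \<Rightarrow> 'w measure" where
  "threshold_sigma P X I C = sigma (space P) {{\<omega> \<in> space P. X i \<omega> < c} | i c. i \<in> I \<and> c \<in> C}"

lemma
  shows space_threshold_sigma [simp]: "space (threshold_sigma P X I C) = space P"
    and sets_threshold_sigma:
      "sets (threshold_sigma P X I C) = sigma_sets (space P) {{\<omega> \<in> space P. X i \<omega> < c} | i c. i \<in> I \<and> c \<in> C}"
  unfolding threshold_sigma_def by (auto intro!: space_measure_of sets_measure_of)

lemma threshold_event_in_sets: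
  "i \<in> I \<Longrightarrow> c \<in> C \<Longrightarrow> {\<omega> \<in> space P. X i \<omega> < c} \<in> sets (threshold_sigma P X I C)"
  unfolding sets_threshold_sigma by (rule sigma_sets.Basic) blast

lemma subalgebra_threshold_sigma:
  fixes X :: "'i \<Rightarrow> 'w \<Rightarrow> 'a::{linorder_topology, second_countable_topology}"
  assumes "\<And>i. i \<in> I \<Longrightarrow> X i \<in> borel_measurable P"
  shows "subalgebra P (threshold_sigma P X I C)"
  unfolding subalgebra_def sets_threshold_sigma
  using assms by (auto intro!: sets.sigma_sets_subset)

lemma sets_threshold_sigma_finite_Inter:
  "sets (threshold_sigma P X I C) =
    sigma_sets (space P) {{\<omega> \<in> space P. \<forall>(i, c)\<in>J. X i \<omega> < c} | J. finite J \<and> J \<subseteq> I \<times> C}"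
  unfolding sets_threshold_sigma
proof (rule sigma_sets_eqI)
  fix A assume "A \<in> {{\<omega> \<in> space P. X i \<omega> < c} | i c. i \<in> I \<and> c \<in> C}"
  then obtain i c where "A = {\<omega> \<in> space P. \<forall>(i, c)\<in>{(i, c)}. X i \<omega> < c}" "(i, c) \<in> I \<times> C"
    by auto
  then show "A \<in> sigma_sets (space P) {{\<omega> \<in> space P. \<forall>(i, c)\<in>J. X i \<omega> < c} | J. finite J \<and> J \<subseteq> I \<times> C}"
    by (intro sigma_sets.Basic) blast
next
  fix A assume "A \<in> {{\<omega> \<in> space P. \<forall>(i, c)\<in>J. X i \<omega> < c} | J. finite J \<and> J \<subseteq> I \<times> C}"
  then obtain J where A: "A = {\<omega> \<in> space P. \<forall>(i, c)\<in>J. X i \<omega> < c}" and J: "finite J" "J \<subseteq> I \<times> C"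
    by blast
  from J have "{\<omega> \<in> space P. \<forall>(i, c)\<in>J. X i \<omega> < c} \<in> sets (threshold_sigma P X I C)"
  proof (induction J rule: finite_induct)
    case empty
    then show ?case
      using sets.top[of "threshold_sigma P X I C"] by simp
  next
    case (insert p J)
    then have "{\<omega> \<in> space P. X (fst p) \<omega> < snd p} \<in> sets (threshold_sigma P X I C)"
      by (intro threshold_event_in_sets) auto
    moreover have "{\<omega> \<in> space P. \<forall>(i, c)\<in>insert p J. X i \<omega> < c} =
        {\<omega> \<in> space P. X (fst p) \<omega> < snd p} \<inter> {\<omega> \<in> space P. \<forall>(i, c)\<in>J. X i \<omega> < c}"
      by (auto simp: split_beta)
    ultimately show ?case
      using insert by auto
  qed
  then show "A \<in> sigma_sets (space P) {{\<omega> \<in> space P. X i \<omega> < c} | i c. i \<in> I \<and> c \<in> C}"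
    unfolding A sets_threshold_sigma .
qed

lemma borel_measurable_clamp_threshold_sigma:
  fixes X :: "'i \<Rightarrow> 'w \<Rightarrow> 'a::{linorder_topology, second_countable_topology}"
  assumes "i \<in> I" "c \<le> d"
  shows "(\<lambda>\<omega>. min (max (X i \<omega>) c) d) \<in> borel_measurable (threshold_sigma P X I {c..d})"
proof (rule borel_measurableI_less)
  fix y
  let ?G = "threshold_sigma P X I {c..d}"
  have "y \<le> c \<or> d < y \<or> (c < y \<and> y \<le> d)"
    by (meson not_le)
  then show "{\<omega> \<in> space ?G. min (max (X i \<omega>) c) d < y} \<in> sets ?G"
  proof (elim disjE conjE)
    assume "y \<le> c"
    then have "{\<omega> \<in> space ?G. min (max (X i \<omega>) c) d < y} = {}"
      using assms(2) by (auto simp: min_less_iff_disj)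
    then show ?thesis
      by (metis sets.empty_sets)
  next
    assume "d < y"
    then have "{\<omega> \<in> space ?G. min (max (X i \<omega>) c) d < y} = space ?G"
      by (auto simp: min_less_iff_disj)
    then show ?thesis
      by (metis sets.top)
  next
    assume "c < y" "y \<le> d"
    then have "{\<omega> \<in> space ?G. min (max (X i \<omega>) c) d < y} = {\<omega> \<in> space P. X i \<omega> < y}"
      by (auto simp: min_less_iff_disj)
    then show ?thesis
      using \<open>c < y\<close> \<open>y \<le> d\<close> assms(1) threshold_event_in_sets[of i I y "{c..d}" P X] by simp
  qed
qed

lemma indep_var_component_restrict:
  assumes P: "prob_space P" and indep: "prob_space.indep_vars P (\<lambda>_. borel) X I" and "n \<in> I"
    and f: "f \<in> borel_measurable borel" and g: "g \<in> borel_measurable (PiM K (\<lambda>_. borel))"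
    and "K \<subseteq> I" "n \<notin> K"
  shows "prob_space.indep_var P borel (\<lambda>\<omega>. f (X n \<omega>)) borel (\<lambda>\<omega>. g (restrict (\<lambda>i. X i \<omega>) K))"
proof -
  interpret prob_space P by (rule P)
  have "indep_var (PiM {n} (\<lambda>_. borel)) (\<lambda>\<omega>. restrict (\<lambda>i. X i \<omega>) {n})
      (PiM K (\<lambda>_. borel)) (\<lambda>\<omega>. restrict (\<lambda>i. X i \<omega>) K)"
    using assms by (intro indep_var_restrict[OF indep]) auto
  moreover have "(\<lambda>y. f (y n)) \<in> borel_measurable (PiM {n} (\<lambda>_. borel))"
    using f by measurable
  ultimately have "indep_var borel ((\<lambda>y. f (y n)) \<circ> (\<lambda>\<omega>. restrict (\<lambda>i. X i \<omega>) {n}))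
      borel (g \<circ> (\<lambda>\<omega>. restrict (\<lambda>i. X i \<omega>) K))"
    using g by (rule indep_var_compose)
  then show ?thesis
    by (simp add: comp_def)
qed

lemma set_integral_threshold_Inter_eq_0:
  fixes X :: "'i \<Rightarrow> 'w \<Rightarrow> 'a::{linorder_topology, second_countable_topology}" and f :: "'a \<Rightarrow> real"
  assumes P: "prob_space P" and indep: "prob_space.indep_vars P (\<lambda>_. borel) X I" and n: "n \<in> I"
    and f [measurable]: "f \<in> borel_measurable borel" and f_int: "integrable P (\<lambda>\<omega>. f (X n \<omega>))"
    and mean: "(\<integral>\<omega>. f (X n \<omega>) \<partial>P) = 0" and vanish: "\<And>x. d \<le> x \<Longrightarrow> f x = 0"
    and J: "finite J" "J \<subseteq> I \<times> {d..}"
  shows "(LINT \<omega>:{\<omega> \<in> space P. \<forall>(i, c)\<in>J. X i \<omega> < c}|P. f (X n \<omega>)) = 0"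
proof -
  interpret P: prob_space P by (rule P)
  define J' where "J' = {p \<in> J. fst p \<noteq> n}"
  define K where "K = fst ` J'"
  define g :: "('i \<Rightarrow> 'a) \<Rightarrow> real" where "g y = (if \<forall>p\<in>J'. y (fst p) < snd p then 1 else 0)" for y
  have "finite J'" "K \<subseteq> I" "n \<notin> K"
    using J n by (auto simp: J'_def K_def)
  have g_meas: "g \<in> borel_measurable (PiM K (\<lambda>_. borel))"
    unfolding g_def using \<open>finite J'\<close> by (measurable, auto simp: K_def)
  have "P.indep_var borel (\<lambda>\<omega>. f (X n \<omega>)) borel (\<lambda>\<omega>. g (restrict (\<lambda>i. X i \<omega>) K))"
    using \<open>K \<subseteq> I\<close> \<open>n \<notin> K\<close> by (rule indep_var_component_restrict[OF P indep n f g_meas])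
  moreover have "integrable P (\<lambda>\<omega>. g (restrict (\<lambda>i. X i \<omega>) K))"
  proof (rule P.integrable_const_bound[where B = 1])
    have "\<And>i. i \<in> K \<Longrightarrow> X i \<in> borel_measurable P"
      using indep \<open>K \<subseteq> I\<close> by (auto simp: P.indep_vars_def)
    then show "(\<lambda>\<omega>. g (restrict (\<lambda>i. X i \<omega>) K)) \<in> borel_measurable P"
      by (intro measurable_compose[OF measurable_restrict g_meas])
  qed (simp add: g_def)
  ultimately have "(\<integral>\<omega>. f (X n \<omega>) * g (restrict (\<lambda>i. X i \<omega>) K) \<partial>P) = 0"
    using f_int mean by (subst P.indep_var_lebesgue_integral) auto
  \<comment> \<open>where \<open>f (X n \<omega>) \<noteq> 0\<close>, every constraint \<open>(n, c) \<in> J\<close> holds since \<open>X n \<omega> < d \<le> c\<close>\<close>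
  moreover have "indicator {\<omega> \<in> space P. \<forall>(i, c)\<in>J. X i \<omega> < c} \<omega> *\<^sub>R f (X n \<omega>)
      = f (X n \<omega>) * g (restrict (\<lambda>i. X i \<omega>) K)" if "\<omega> \<in> space P" for \<omega>
  proof (cases "X n \<omega> < d")
    case True
    then have "X n \<omega> < c" if "(n, c) \<in> J" for c
      using J(2) that by (auto intro: order.strict_trans2)
    then have "(\<forall>(i, c)\<in>J. X i \<omega> < c) \<longleftrightarrow> (\<forall>p\<in>J'. X (fst p) \<omega> < snd p)"
      by (auto simp: J'_def K_def)
    then show ?thesis
      using that by (auto simp: g_def K_def J'_def indicator_def)
  qed (simp add: vanish)
  ultimately show ?thesis
    unfolding set_lebesgue_integral_def by (metis (no_types, lifting) Bochner_Integration.integral_cong)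
qed

lemma set_integral_eq_0_sigma_sets:
  fixes f :: "'a \<Rightarrow> real"
  assumes f_int: "integrable M f" and mean: "(\<integral>x. f x \<partial>M) = 0"
    and G: "Int_stable G" "G \<subseteq> Pow (space M)" "sigma_sets (space M) G \<subseteq> sets M"
    and basic: "\<And>B. B \<in> G \<Longrightarrow> (LINT x:B|M. f x) = 0"
    and A: "A \<in> sigma_sets (space M) G"
  shows "(LINT x:A|M. f x) = 0"
  using G(1,2) A
proof (induction rule: sigma_sets_induct_disjoint)
  case (basic B)
  then show ?case
    by (rule assms(6))
next
  case empty
  then show ?case
    by (simp add: set_lebesgue_integral_def)
next
  case (compl B)
  have "B \<in> sets M"
    using compl(1) G(3) by blast
  have "(LINT x:space M - B|M. f x) = (\<integral>x. f x - indicator B x * f x \<partial>M)"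
    unfolding set_lebesgue_integral_def
    by (intro Bochner_Integration.integral_cong) (auto simp: indicator_def)
  also have "\<dots> = (\<integral>x. f x \<partial>M) - (LINT x:B|M. f x)"
    using f_int integrable_mult_indicator[OF \<open>B \<in> sets M\<close> f_int]
    by (simp add: set_lebesgue_integral_def)
  finally show ?case
    using mean compl.IH by simp
next
  case (union B)
  have B: "B i \<in> sets M" for i
    using union(2) G(3) by blast
  have "(LINT x:(\<Union>i. B i)|M. f x) = (\<Sum>i. (LINT x:B i|M. f x))"
  proof (rule lebesgue_integral_countable_add)
    show "B i \<inter> B j = {}" if "i \<noteq> j" for i j
      using union(1) that by (auto simp: disjoint_family_on_def)
    show "set_integrable M (\<Union>i. B i) f"
      unfolding set_integrable_def using B by (intro integrable_mult_indicator[OF _ f_int]) auto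
  qed (rule B)
  then show ?case
    using union.IH by simp
qed

lemma Int_stable_threshold_Inter:
  "Int_stable {{\<omega> \<in> space P. \<forall>(i, c)\<in>J. X i \<omega> < c} | J. finite J \<and> J \<subseteq> I \<times> C}"
proof (rule Int_stableI)
  fix B1 B2 assume "B1 \<in> {{\<omega> \<in> space P. \<forall>(i, c)\<in>J. X i \<omega> < c} | J. finite J \<and> J \<subseteq> I \<times> C}"
    "B2 \<in> {{\<omega> \<in> space P. \<forall>(i, c)\<in>J. X i \<omega> < c} | J. finite J \<and> J \<subseteq> I \<times> C}"
  then obtain J1 J2 where "B1 = {\<omega> \<in> space P. \<forall>(i, c)\<in>J1. X i \<omega> < c}" "finite J1" "J1 \<subseteq> I \<times> C"
    "B2 = {\<omega> \<in> space P. \<forall>(i, c)\<in>J2. X i \<omega> < c}" "finite J2" "J2 \<subseteq> I \<times> C"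
    by auto
  then have "B1 \<inter> B2 = {\<omega> \<in> space P. \<forall>(i, c)\<in>J1 \<union> J2. X i \<omega> < c}" "finite (J1 \<union> J2)" "J1 \<union> J2 \<subseteq> I \<times> C"
    by auto
  then show "B1 \<inter> B2 \<in> {{\<omega> \<in> space P. \<forall>(i, c)\<in>J. X i \<omega> < c} | J. finite J \<and> J \<subseteq> I \<times> C}"
    by blast
qed

lemma set_integral_threshold_sigma_eq_0:
  fixes X :: "'i \<Rightarrow> 'w \<Rightarrow> 'a::{linorder_topology, second_countable_topology}" and f :: "'a \<Rightarrow> real"
  assumes P: "prob_space P" and indep: "prob_space.indep_vars P (\<lambda>_. borel) X I" and n: "n \<in> I"
    and f [measurable]: "f \<in> borel_measurable borel" and f_int: "integrable P (\<lambda>\<omega>. f (X n \<omega>))"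
    and mean: "(\<integral>\<omega>. f (X n \<omega>) \<partial>P) = 0" and vanish: "\<And>x. d \<le> x \<Longrightarrow> f x = 0"
    and C: "C \<subseteq> {d..}" and A: "A \<in> sets (threshold_sigma P X I C)"
  shows "(LINT \<omega>:A|P. f (X n \<omega>)) = 0"
proof (rule set_integral_eq_0_sigma_sets[OF f_int mean Int_stable_threshold_Inter])
  have "subalgebra P (threshold_sigma P X I C)"
    using indep by (intro subalgebra_threshold_sigma) (auto simp: prob_space.indep_vars_def[OF P])
  then show "sigma_sets (space P) {{\<omega> \<in> space P. \<forall>(i, c)\<in>J. X i \<omega> < c} | J. finite J \<and> J \<subseteq> I \<times> C}
      \<subseteq> sets P"
    by (simp add: subalgebra_def sets_threshold_sigma_finite_Inter)
  show "A \<in> sigma_sets (space P) {{\<omega> \<in> space P. \<forall>(i, c)\<in>J. X i \<omega> < c} | J. finite J \<and> J \<subseteq> I \<times> C}"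
    using A by (simp add: sets_threshold_sigma_finite_Inter)
  fix B assume "B \<in> {{\<omega> \<in> space P. \<forall>(i, c)\<in>J. X i \<omega> < c} | J. finite J \<and> J \<subseteq> I \<times> C}"
  then obtain J where "B = {\<omega> \<in> space P. \<forall>(i, c)\<in>J. X i \<omega> < c}" "finite J" "J \<subseteq> I \<times> {d..}"
    using C by blast
  then show "(LINT \<omega>:B|P. f (X n \<omega>)) = 0"
    using set_integral_threshold_Inter_eq_0[OF P indep n f f_int mean vanish] by simp
qed auto

section \<open>The processes \<open>Z\<close>, \<open>A\<close> and \<open>M\<close>\<close>

lemma Zleft_eq_indicator:
  assumes "0 \<le> T - x"
  shows "Zleft \<tau> T n x \<omega> = (if \<tau> n \<omega> \<le> ennreal (T - x) then 1 else 0)"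
proof -
  let ?v = "\<tau> n \<omega>" and ?z = "if \<tau> n \<omega> \<le> ennreal (T - x) then 1 else 0 :: real"
  have "\<forall>\<^sub>F u in at_left x. Zproc \<tau> T n u \<omega> = ?z"
  proof (cases "?v \<le> ennreal (T - x)")
    case True
    have "Zproc \<tau> T n u \<omega> = ?z" if "u < x" for u
      using that assms True by (auto simp: Zproc_def ennreal_less_iff intro: order.strict_trans1)
    then show ?thesis
      by (intro eventually_mono[OF eventually_at_left_real[of "x - 1" x]]) auto
  next
    case False
    show ?thesis
    proof (cases "?v = top")
      case True
      then show ?thesis by (simp add: Zproc_def top_unique)
    next
      case finite: False
      then obtain \<sigma> where \<sigma>: "?v = ennreal \<sigma>" "0 \<le> \<sigma>"
        by (cases ?v rule: ennreal_cases) auto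
      with False have "T - x < \<sigma>" by (metis ennreal_leI not_less)
      have "Zproc \<tau> T n u \<omega> = ?z" if "u \<in> {x - (\<sigma> - (T - x))<..<x}" for u
        using that False \<sigma> by (auto simp: Zproc_def ennreal_less_iff)
      then show ?thesis
        using \<open>T - x < \<sigma>\<close>
        by (intro eventually_mono[OF eventually_at_left_real[of "x - (\<sigma> - (T - x))" x]]) auto
    qed
  qed
  then have "((\<lambda>u. Zproc \<tau> T n u \<omega>) \<longlongrightarrow> ?z) (at_left x)"
    by (rule tendsto_eventually)
  then show ?thesis
    unfolding Zleft_def by (intro tendsto_Lim) auto
qed

lemma Aproc_eq_compensator:
  "Aproc \<mu> \<tau> T n t \<omega> = - compensator \<mu> (ennreal (T - t)) (ennreal T) (\<tau> n \<omega>)"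
proof -
  have "Zleft \<tau> T n (T - enn2real r) \<omega> = (if \<tau> n \<omega> \<le> r then 1 else 0)" if "r < ennreal T" for r
  proof -
    have "r < top"
      using that ennreal_less_top[of T] by (rule order.strict_trans)
    then show ?thesis
      by (subst Zleft_eq_indicator) auto
  qed
  then show ?thesis
    unfolding Aproc_def compensator_def compensator_density_def set_lebesgue_integral_def
    by (intro arg_cong[where f = uminus] Bochner_Integration.integral_cong) (auto simp: indicator_def)
qed

lemma Mproc_eq_compensated_indicator:
  assumes "0 \<le> t"
  shows "Mproc \<mu> \<tau> T n t = (\<lambda>\<omega>. compensated_indicator \<mu> (ennreal (T - t)) (ennreal T) (\<tau> n \<omega>))"
proof -
  have "ennreal (T - t) \<le> ennreal T"
    using assms by (simp add: ennreal_leI)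
  then show ?thesis
    by (auto simp: fun_eq_iff Mproc_def Zproc_def Aproc_eq_compensator compensated_indicator_def indicator_def)
qed

lemma ennreal_atLeastAtMost_eq_image:
  fixes t T :: real
  assumes "0 \<le> t" "t \<le> T"
  shows "{ennreal (T - t)..ennreal T} = (\<lambda>s. ennreal (T - s)) ` {0..t}"
proof
  show "(\<lambda>s. ennreal (T - s)) ` {0..t} \<subseteq> {ennreal (T - t)..ennreal T}"
    by (auto intro!: ennreal_leI)
next
  show "{ennreal (T - t)..ennreal T} \<subseteq> (\<lambda>s. ennreal (T - s)) ` {0..t}"
  proof
    fix c assume c: "c \<in> {ennreal (T - t)..ennreal T}"
    then obtain r where r: "c = ennreal r" "0 \<le> r"
      by (cases c rule: ennreal_cases) (auto simp: top_unique)
    with c assms have "T - t \<le> r" "r \<le> T"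
      by (auto simp: ennreal_le_iff2 ennreal_le_iff)
    then show "c \<in> (\<lambda>s. ennreal (T - s)) ` {0..t}"
      using r by (intro image_eqI[of _ _ "T - r"]) auto
  qed
qed

lemma Gfilt_eq_threshold_sigma:
  assumes "0 \<le> t" "t \<le> T"
  shows "Gfilt P \<tau> T t = threshold_sigma P \<tau> {1..} {ennreal (T - t)..ennreal T}"
  unfolding Gfilt_def threshold_sigma_def ennreal_atLeastAtMost_eq_image[OF assms]
  by (intro arg_cong[where f = "sigma (space P)"]) (auto; (intro exI conjI)?; (rule refl)?; auto)

context
  fixes \<mu> :: "ennreal measure" and P :: "'w measure" and \<tau> :: "nat \<Rightarrow> 'w \<Rightarrow> ennreal"
    and T a :: real and n :: nat
  assumes finite_mu: "finite_measure \<mu>" and sets_mu: "sets \<mu> = sets borel"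
    and P: "prob_space P" and indep: "prob_space.indep_vars P (\<lambda>_. borel) \<tau> {1..}" and n: "1 \<le> n"
    and law: "\<And>B. B \<in> sets borel \<Longrightarrow> B \<subseteq> {..<ennreal T} \<Longrightarrow>
      measure P {\<omega> \<in> space P. \<tau> n \<omega> \<in> B} = a * measure \<mu> B"
begin

interpretation P: prob_space P by (rule P)

lemma measurable_tau [measurable]: "1 \<le> i \<Longrightarrow> \<tau> i \<in> borel_measurable P"
  using indep by (auto simp: P.indep_vars_def)

lemma integrable_Mproc:
  "0 \<le> t \<Longrightarrow> 0 < cdfI \<mu> (ennreal (T - t)) \<Longrightarrow> integrable P (Mproc \<mu> \<tau> T n t)"
  using integrable_compensated_indicator[OF finite_mu sets_mu P.finite_measure_axioms measurable_tau[OF n]]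
  by (simp add: Mproc_eq_compensated_indicator)

lemma expectation_Mproc:
  "0 \<le> t \<Longrightarrow> 0 < cdfI \<mu> (ennreal (T - t)) \<Longrightarrow> (\<integral>\<omega>. Mproc \<mu> \<tau> T n t \<omega> \<partial>P) = 0"
  using integral_compensated_indicator_eq_0[OF finite_mu sets_mu P measurable_tau[OF n] _ law]
  by (simp add: Mproc_eq_compensated_indicator)

lemma Mproc_measurable_Gfilt:
  assumes "0 \<le> t" "t \<le> T"
  shows "Mproc \<mu> \<tau> T n t \<in> borel_measurable (Gfilt P \<tau> T t)"
proof -
  let ?c = "ennreal (T - t)"
  let ?G = "threshold_sigma P \<tau> {1..} {?c..ennreal T}"
  have "?c \<le> ennreal T"
    using assms by (simp add: ennreal_leI)
  then have [measurable]: "(\<lambda>\<omega>. min (max (\<tau> n \<omega>) ?c) (ennreal T)) \<in> borel_measurable ?G"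
    using n by (intro borel_measurable_clamp_threshold_sigma) auto
  have [measurable]: "Measurable.pred ?G (\<lambda>\<omega>. \<tau> n \<omega> < ?c)" "Measurable.pred ?G (\<lambda>\<omega>. \<tau> n \<omega> < ennreal T)"
    using n \<open>?c \<le> ennreal T\<close> threshold_event_in_sets[of n "{1..}" _ "{?c..ennreal T}" P \<tau>]
    by (auto simp: pred_def)
  \<comment> \<open>\<open>\<tau> n\<close> itself is not measurable for the filtration, but its clamp to \<open>[T - t, T]\<close> is\<close>
  have "Mproc \<mu> \<tau> T n t = (\<lambda>\<omega>. compensator \<mu> ?c (ennreal T) (min (max (\<tau> n \<omega>) ?c) (ennreal T))
      - (if \<tau> n \<omega> < ennreal T then 1 else 0) + (if \<tau> n \<omega> < ?c then 1 else 0))"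
    using assms \<open>?c \<le> ennreal T\<close>
    by (auto simp: Mproc_eq_compensated_indicator compensated_indicator_def
        compensator_clamp[OF finite_mu sets_mu] indicator_def fun_eq_iff not_less
        dest: order.strict_trans2[OF _ \<open>?c \<le> ennreal T\<close>])
  also have "\<dots> \<in> borel_measurable ?G"
    using borel_measurable_compensator[OF finite_mu sets_mu] by measurable
  finally show ?thesis
    using assms by (simp add: Gfilt_eq_threshold_sigma)
qed

lemma Mproc_diff:
  assumes "0 \<le> s" "s \<le> t" "0 < cdfI \<mu> (ennreal (T - t))"
  shows "Mproc \<mu> \<tau> T n t \<omega> - Mproc \<mu> \<tau> T n s \<omega> =
    compensated_indicator \<mu> (ennreal (T - t)) (ennreal (T - s)) (\<tau> n \<omega>)"
  using assms compensated_indicator_split[OF finite_mu sets_mu assms(3), of "ennreal (T - s)" "ennreal T"]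
  by (simp add: Mproc_eq_compensated_indicator ennreal_leI)

lemma set_integral_Mproc_eq:
  assumes st: "0 \<le> s" "s \<le> t" "t \<le> T" and pos: "0 < cdfI \<mu> (ennreal (T - t))"
    and A: "A \<in> sets (Gfilt P \<tau> T s)"
  shows "(LINT \<omega>:A|P. Mproc \<mu> \<tau> T n t \<omega>) = (LINT \<omega>:A|P. Mproc \<mu> \<tau> T n s \<omega>)"
proof -
  let ?f = "compensated_indicator \<mu> (ennreal (T - t)) (ennreal (T - s))"
  have pos_s: "0 < cdfI \<mu> (ennreal (T - s))"
    using pos cdfI_mono[OF finite_mu sets_mu, of "ennreal (T - t)" "ennreal (T - s)"] st
    by (simp add: ennreal_leI)
  have "(LINT \<omega>:A|P. ?f (\<tau> n \<omega>)) = 0"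
  proof (rule set_integral_threshold_sigma_eq_0[OF P indep])
    show "integrable P (\<lambda>\<omega>. ?f (\<tau> n \<omega>))"
      using pos by (rule integrable_compensated_indicator[OF finite_mu sets_mu P.finite_measure_axioms measurable_tau[OF n]])
    have sub: "{..<ennreal (T - s)} \<subseteq> {..<ennreal T}"
      using st by (auto simp: ennreal_leI intro: order.strict_trans2)
    have "measure P {\<omega> \<in> space P. \<tau> n \<omega> \<in> B} = a * measure \<mu> B"
      if "B \<in> sets borel" "B \<subseteq> {..<ennreal (T - s)}" for B
      using that sub by (intro law) auto
    then show "(\<integral>\<omega>. ?f (\<tau> n \<omega>) \<partial>P) = 0"
      by (rule integral_compensated_indicator_eq_0[OF finite_mu sets_mu P measurable_tau[OF n] pos])
    show "A \<in> sets (threshold_sigma P \<tau> {1..} {ennreal (T - s)..ennreal T})"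
      using A st by (simp add: Gfilt_eq_threshold_sigma)
  qed (use n compensated_indicator_eq_0[OF finite_mu sets_mu]
      borel_measurable_compensated_indicator[OF finite_mu sets_mu] in auto)
  moreover have "A \<in> sets P"
    using A st subalgebra_threshold_sigma[of "{1..}" \<tau> P, OF measurable_tau]
    by (auto simp: Gfilt_eq_threshold_sigma subalgebra_def)
  ultimately show ?thesis
    using Mproc_diff[OF st(1,2) pos] set_integral_diff(2)[of P A "Mproc \<mu> \<tau> T n t" "Mproc \<mu> \<tau> T n s"]
      integrable_mult_indicator[OF _ integrable_Mproc] st pos pos_s
    by (simp add: set_integrable_def)
qed

lemma real_cond_exp_Mproc:
  assumes st: "0 \<le> s" "s \<le> t" "t \<le> T" and pos: "0 < cdfI \<mu> (ennreal (T - t))"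
  shows "AE \<omega> in P. real_cond_exp P (Gfilt P \<tau> T s) (Mproc \<mu> \<tau> T n t) \<omega> = Mproc \<mu> \<tau> T n s \<omega>"
proof -
  have "subalgebra P (Gfilt P \<tau> T s)"
    using st by (auto simp: Gfilt_eq_threshold_sigma intro!: subalgebra_threshold_sigma measurable_tau)
  then interpret G: finite_measure_subalgebra P "Gfilt P \<tau> T s"
    by unfold_locales (auto simp: subalgebra_def)
  have pos_s: "0 < cdfI \<mu> (ennreal (T - s))"
    using pos cdfI_mono[OF finite_mu sets_mu, of "ennreal (T - t)" "ennreal (T - s)"] st
    by (simp add: ennreal_leI)
  have "integrable P (Mproc \<mu> \<tau> T n t)" "integrable P (Mproc \<mu> \<tau> T n s)"
    using st pos pos_s by (auto intro: integrable_Mproc)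
  moreover have "Mproc \<mu> \<tau> T n s \<in> borel_measurable (Gfilt P \<tau> T s)"
    using st by (intro Mproc_measurable_Gfilt) auto
  ultimately show ?thesis
    using set_integral_Mproc_eq[OF st pos] by (rule G.real_cond_exp_charact[rotated])
qed

end

lemma measure_vimage_eq_below:
  fixes X :: "'w \<Rightarrow> 'a::linorder_topology"
  assumes law: "\<And>A. A \<in> sets borel \<Longrightarrow> measure P {\<omega> \<in> space P. X \<omega> \<in> A} =
      measure \<mu> (A \<inter> {..<c}) * a + measure \<mu> (A \<inter> {c..}) * b"
    and "B \<in> sets borel" "B \<subseteq> {..<c}"
  shows "measure P {\<omega> \<in> space P. X \<omega> \<in> B} = a * measure \<mu> B"
proof -
  have "B \<inter> {..<c} = B" "B \<inter> {c..} = {}"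
    using assms(3) by auto
  then show ?thesis
    using law[OF assms(2)] by simp
qed

theorem lemma6p2:
  fixes \<mu> :: "ennreal measure" and P :: "'w measure" and \<tau> :: "nat \<Rightarrow> 'w \<Rightarrow> ennreal"
    and T \<alpha> Tstar :: real and N :: nat
  assumes mu_prob: "prob_space \<mu>" and mu_borel: "sets \<mu> = sets borel"
    and T_pos: "T > 0"
    and alpha: "0 \<le> \<alpha>" "\<alpha> \<le> 1"
    and FTm: "\<alpha> > cdfI_left \<mu> (ennreal T)" "cdfI_left \<mu> (ennreal T) > 0"
    and F_strict: "\<And>T'. T' < ennreal T \<Longrightarrow> cdfI \<mu> T' < cdfI \<mu> (ennreal T)"
    and P_prob: "prob_space P"
    and tau_rv: "\<And>n. n \<ge> 1 \<Longrightarrow> \<tau> n \<in> borel_measurable P"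
    and tau_indep: "prob_space.indep_vars P (\<lambda>_. borel) \<tau> {1..}"
    and tau_law: "\<And>n A. n \<ge> 1 \<Longrightarrow> A \<in> sets borel \<Longrightarrow>
        measure P {\<omega> \<in> space P. \<tau> n \<omega> \<in> A} =
          measure \<mu> (A \<inter> {..<ennreal T}) * (\<alpha> / cdfI_left \<mu> (ennreal T))
          + measure \<mu> (A \<inter> {ennreal T..}) * ((1 - \<alpha>) / (1 - cdfI_left \<mu> (ennreal T)))"
    and Tstar: "0 < Tstar" "Tstar < T"
    and F_Tstar: "cdfI_left \<mu> (ennreal (T - Tstar)) > 0"
  shows "\<forall>n\<in>{1..N}.
      (\<forall>t\<in>{0..Tstar}. integrable P (Mproc \<mu> \<tau> T n t)
          \<and> Mproc \<mu> \<tau> T n t \<in> borel_measurable (Gfilt P \<tau> T t))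
    \<and> (\<forall>s t. 0 \<le> s \<and> s \<le> t \<and> t \<le> Tstar \<longrightarrow>
          (AE \<omega> in P. real_cond_exp P (Gfilt P \<tau> T s) (Mproc \<mu> \<tau> T n t) \<omega> = Mproc \<mu> \<tau> T n s \<omega>))
    \<and> (\<forall>t\<in>{0..Tstar}. prob_space.expectation P (Mproc \<mu> \<tau> T n t) = 0)"
proof -
  interpret mu: prob_space \<mu> by (rule mu_prob)
  have pos: "0 < cdfI \<mu> (ennreal (T - t))" if "t \<le> Tstar" for t
    using F_Tstar that
      cdfI_left_le_cdfI[OF mu.finite_measure_axioms mu_borel, of "ennreal (T - Tstar)" "ennreal (T - t)"]
    by (simp add: ennreal_leI)
  show ?thesis
  proof (intro ballI conjI allI impI)
    fix n assume "n \<in> {1..N}"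
    then have n: "1 \<le> n"
      by simp
    note model = mu.finite_measure_axioms mu_borel P_prob tau_indep n measure_vimage_eq_below[OF tau_law[OF n]]
    {
      fix t assume "t \<in> {0..Tstar}"
      then have t: "0 \<le> t" "t \<le> Tstar"
        by auto
      show "integrable P (Mproc \<mu> \<tau> T n t)"
        by (rule integrable_Mproc[OF model t(1) pos[OF t(2)]])
      show "prob_space.expectation P (Mproc \<mu> \<tau> T n t) = 0"
        by (rule expectation_Mproc[OF model t(1) pos[OF t(2)]])
      show "Mproc \<mu> \<tau> T n t \<in> borel_measurable (Gfilt P \<tau> T t)"
        using t Tstar by (intro Mproc_measurable_Gfilt[OF model]) auto
    }
    fix s t assume "0 \<le> s \<and> s \<le> t \<and> t \<le> Tstar"
    then show "AE \<omega> in P. real_cond_exp P (Gfilt P \<tau> T s) (Mproc \<mu> \<tau> T n t) \<omega> = Mproc \<mu> \<tau> T n s \<omega>"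
      using Tstar by (intro real_cond_exp_Mproc[OF model] pos) auto
  qed
qed

end
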